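(* (i) $\mathbf{V}_{\mathcal{L}}=\mathbf{LZ}^{\bullet}\circ\mathbf{D}$. (ii) $\mathbf{V}_{\mathcal{R}}=\mathbf{RZ}^{\bullet}\circ\mathbf{D}$.
   Context: An idempotent semiring is an algebra $(S,+,\cdot)$ with $(S,+)$, $(S,\cdot)$ bands and both distributive laws; addition not assumed commutative. Green's relations: $a\,\mathcal{L}^{\bullet}\,b$ iff $ab=a$, $ba=b$; $a\,\mathcal{R}^{\bullet}\,b$ iff $ab=b$, $ba=a$. $\mathbf{V}_{\mathcal{L}}$ (resp. $\mathbf{V}_{\mathcal{R}}$) is the class of idempotent semirings $S$ on which $\mathcal{L}^{\bullet}$ (resp. $\mathcal{R}^{\bullet}$) is the least distributive lattice congruence; equivalently the variety of idempotent semirings satisfying $x\approx xy+x+xy$ (resp. $x\approx yx+x+yx$). $\mathbf{D}$ is the variety of distributive lattices (idempotent semirings satisfying $x+y\approx y+x$, $xy\approx yx$, $x+xy\approx x$); $\mathbf{LZ}^{\bullet}$ (resp. $\mathbf{RZ}^{\bullet}$) is the variety of idempotent semirings satisfying $xy\approx x$ (resp. $xy\approx y$). For classes $\mathbf{V},\mathbf{W}$ of idempotent semirings, the Mal'cev product $\mathbf{V}\circ\mathbf{W}$ is the class of idempotent semirings $S$ admitting a congruence $\rho$ with $S/\rho\in\mathbf{W}$ and every $\rho$-class (a subsemiring) belonging to $\mathbf{V}$. *)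

theory Defs
  imports Main
begin

text \<open>An algebra (S, p, m): carrier set S with addition p and multiplication m
  (total functions, required to be closed on S).  Addition is not assumed commutative.\<close>

definition idem_semiring :: "'a set \<Rightarrow> ('a \<Rightarrow> 'a \<Rightarrow> 'a) \<Rightarrow> ('a \<Rightarrow> 'a \<Rightarrow> 'a) \<Rightarrow> bool" where
  "idem_semiring S p m \<longleftrightarrow>
     (\<forall>x\<in>S. \<forall>y\<in>S. p x y \<in> S \<and> m x y \<in> S) \<and>
     (\<forall>x\<in>S. \<forall>y\<in>S. \<forall>z\<in>S. p (p x y) z = p x (p y z) \<and> m (m x y) z = m x (m y z)) \<and>
     (\<forall>x\<in>S. p x x = x \<and> m x x = x) \<and>
     (\<forall>x\<in>S. \<forall>y\<in>S. \<forall>z\<in>S. m x (p y z) = p (m x y) (m x z) \<and> m (p x y) z = p (m x z) (m y z))"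

definition V_L :: "'a set \<Rightarrow> ('a \<Rightarrow> 'a \<Rightarrow> 'a) \<Rightarrow> ('a \<Rightarrow> 'a \<Rightarrow> 'a) \<Rightarrow> bool" where
  "V_L S p m \<longleftrightarrow> idem_semiring S p m \<and>
     (\<forall>x\<in>S. \<forall>y\<in>S. x = p (p (m x y) x) (m x y))"

definition V_R :: "'a set \<Rightarrow> ('a \<Rightarrow> 'a \<Rightarrow> 'a) \<Rightarrow> ('a \<Rightarrow> 'a \<Rightarrow> 'a) \<Rightarrow> bool" where
  "V_R S p m \<longleftrightarrow> idem_semiring S p m \<and>
     (\<forall>x\<in>S. \<forall>y\<in>S. x = p (p (m y x) x) (m y x))"

text \<open>Distributive lattices as idempotent semirings.\<close>
definition D_var :: "'a set \<Rightarrow> ('a \<Rightarrow> 'a \<Rightarrow> 'a) \<Rightarrow> ('a \<Rightarrow> 'a \<Rightarrow> 'a) \<Rightarrow> bool" where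
  "D_var S p m \<longleftrightarrow> idem_semiring S p m \<and>
     (\<forall>x\<in>S. \<forall>y\<in>S. p x y = p y x \<and> m x y = m y x \<and> p x (m x y) = x)"

definition LZ_var :: "'a set \<Rightarrow> ('a \<Rightarrow> 'a \<Rightarrow> 'a) \<Rightarrow> ('a \<Rightarrow> 'a \<Rightarrow> 'a) \<Rightarrow> bool" where
  "LZ_var S p m \<longleftrightarrow> idem_semiring S p m \<and> (\<forall>x\<in>S. \<forall>y\<in>S. m x y = x)"

definition RZ_var :: "'a set \<Rightarrow> ('a \<Rightarrow> 'a \<Rightarrow> 'a) \<Rightarrow> ('a \<Rightarrow> 'a \<Rightarrow> 'a) \<Rightarrow> bool" where
  "RZ_var S p m \<longleftrightarrow> idem_semiring S p m \<and> (\<forall>x\<in>S. \<forall>y\<in>S. m x y = y)"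

definition semiring_cong :: "'a set \<Rightarrow> ('a \<Rightarrow> 'a \<Rightarrow> 'a) \<Rightarrow> ('a \<Rightarrow> 'a \<Rightarrow> 'a) \<Rightarrow> 'a rel \<Rightarrow> bool" where
  "semiring_cong S p m \<rho> \<longleftrightarrow> equiv S \<rho> \<and>
     (\<forall>a b c d. (a, b) \<in> \<rho> \<longrightarrow> (c, d) \<in> \<rho> \<longrightarrow> (p a c, p b d) \<in> \<rho> \<and> (m a c, m b d) \<in> \<rho>)"

definition quot_op :: "'a rel \<Rightarrow> ('a \<Rightarrow> 'a \<Rightarrow> 'a) \<Rightarrow> 'a set \<Rightarrow> 'a set \<Rightarrow> 'a set" where
  "quot_op \<rho> f A B = \<rho> `` {f a b | a b. a \<in> A \<and> b \<in> B}"

definition malcev ::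
  "('a set \<Rightarrow> ('a \<Rightarrow> 'a \<Rightarrow> 'a) \<Rightarrow> ('a \<Rightarrow> 'a \<Rightarrow> 'a) \<Rightarrow> bool) \<Rightarrow>
   ('a set set \<Rightarrow> ('a set \<Rightarrow> 'a set \<Rightarrow> 'a set) \<Rightarrow> ('a set \<Rightarrow> 'a set \<Rightarrow> 'a set) \<Rightarrow> bool) \<Rightarrow>
   'a set \<Rightarrow> ('a \<Rightarrow> 'a \<Rightarrow> 'a) \<Rightarrow> ('a \<Rightarrow> 'a \<Rightarrow> 'a) \<Rightarrow> bool" where
  "malcev V W S p m \<longleftrightarrow> idem_semiring S p m \<and>
     (\<exists>\<rho>. semiring_cong S p m \<rho> \<and>
          W (S // \<rho>) (quot_op \<rho> p) (quot_op \<rho> m) \<and>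
          (\<forall>C \<in> S // \<rho>. V C p m))"

end

theory Submission
  imports Defs
begin

text \<open>
  In a member of \<open>V_L\<close> the identity \<open>x = xy + x + xy\<close> yields the absorption laws
  \<open>x + xy = x = xy + x\<close> and the regularity law \<open>xyx = xy\<close>.  From these one checks that
  \<open>\<L>\<^sup>\<bullet>\<close> is a congruence whose classes are left-zero bands and whose quotient
  satisfies the lattice laws, since \<open>a + b \<L>\<^sup>\<bullet> b + a\<close>, \<open>ab \<L>\<^sup>\<bullet> ba\<close>.
  Conversely, given a congruence \<open>\<rho>\<close> with distributive-lattice quotient and left-zero
  classes, \<open>x\<close> and \<open>u = xy + x + xy\<close> lie in one class by absorption in the quotient, so
  \<open>x = xu\<close>; but \<open>xu = u\<close> holds in any idempotent semiring.  Part (ii) is part (i) for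
  the opposite multiplication.
\<close>

lemma quot_op_classes:
  assumes "equiv S \<rho>" and "a \<in> S" and "b \<in> S"
    and compatible: "\<And>a b c d. (a, b) \<in> \<rho> \<Longrightarrow> (c, d) \<in> \<rho> \<Longrightarrow> (f a c, f b d) \<in> \<rho>"
  shows "quot_op \<rho> f (\<rho> `` {a}) (\<rho> `` {b}) = \<rho> `` {f a b}"
proof -
  have "(a, a) \<in> \<rho>" "(b, b) \<in> \<rho>" and "trans \<rho>"
    using assms(1-3) by (auto simp: equiv_def refl_on_def)
  then show ?thesis
    unfolding quot_op_def using compatible by (blast dest: transD)
qed

lemma ball_quotient_iff: "(\<forall>X\<in>A // r. P X) \<longleftrightarrow> (\<forall>a\<in>A. P (r `` {a}))"
  by (auto simp: quotient_def)

locale idempotent_semiring =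
  fixes S :: "'a set" and p m :: "'a \<Rightarrow> 'a \<Rightarrow> 'a"
  assumes idem_semiring: "idem_semiring S p m"
begin

lemma add_closed[simp]: "x \<in> S \<Longrightarrow> y \<in> S \<Longrightarrow> p x y \<in> S"
  and mult_closed[simp]: "x \<in> S \<Longrightarrow> y \<in> S \<Longrightarrow> m x y \<in> S"
  and add_assoc[simp]: "x \<in> S \<Longrightarrow> y \<in> S \<Longrightarrow> z \<in> S \<Longrightarrow> p (p x y) z = p x (p y z)"
  and mult_assoc[simp]: "x \<in> S \<Longrightarrow> y \<in> S \<Longrightarrow> z \<in> S \<Longrightarrow> m (m x y) z = m x (m y z)"
  and add_idem[simp]: "x \<in> S \<Longrightarrow> p x x = x"
  and mult_idem[simp]: "x \<in> S \<Longrightarrow> m x x = x"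
  and mult_add_left[simp]: "x \<in> S \<Longrightarrow> y \<in> S \<Longrightarrow> z \<in> S \<Longrightarrow> m x (p y z) = p (m x y) (m x z)"
  and mult_add_right[simp]: "x \<in> S \<Longrightarrow> y \<in> S \<Longrightarrow> z \<in> S \<Longrightarrow> m (p x y) z = p (m x z) (m y z)"
  using idem_semiring unfolding idem_semiring_def by blast+

lemma mult_left_idem[simp]: "x \<in> S \<Longrightarrow> y \<in> S \<Longrightarrow> m x (m x y) = m x y"
  using mult_assoc[of x x y] by simp

lemma cong_quot_op_classes:
  assumes "semiring_cong S p m \<rho>" and "a \<in> S" and "b \<in> S"
  shows "quot_op \<rho> p (\<rho> `` {a}) (\<rho> `` {b}) = \<rho> `` {p a b}"
    and "quot_op \<rho> m (\<rho> `` {a}) (\<rho> `` {b}) = \<rho> `` {m a b}"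
  using assms quot_op_classes[of S \<rho> a b] unfolding semiring_cong_def by blast+

lemma D_var_quotient_iff:
  assumes cong: "semiring_cong S p m \<rho>"
  shows "D_var (S // \<rho>) (quot_op \<rho> p) (quot_op \<rho> m) \<longleftrightarrow>
    (\<forall>a\<in>S. \<forall>b\<in>S. (p a b, p b a) \<in> \<rho> \<and> (m a b, m b a) \<in> \<rho> \<and> (p a (m a b), a) \<in> \<rho>)"
proof -
  have equiv: "equiv S \<rho>"
    using cong by (simp add: semiring_cong_def)
  note classes = cong_quot_op_classes[OF cong]
  have "idem_semiring (S // \<rho>) (quot_op \<rho> p) (quot_op \<rho> m)"
    unfolding idem_semiring_def ball_quotient_iff by (simp add: classes quotientI)
  then show ?thesis
    unfolding D_var_def ball_quotient_iff by (simp add: classes eq_equiv_class_iff[OF equiv])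
qed

lemma LZ_var_cong_class_iff:
  assumes cong: "semiring_cong S p m \<rho>" and C: "C \<in> S // \<rho>"
  shows "LZ_var C p m \<longleftrightarrow> (\<forall>a\<in>C. \<forall>b\<in>C. m a b = a)"
proof -
  have equiv: "equiv S \<rho>"
    using cong by (simp add: semiring_cong_def)
  have C_sub: "C \<subseteq> S"
    using equiv C by (rule in_quotient_imp_subset)
  have related: "(a, b) \<in> \<rho>" if "a \<in> C" "b \<in> C" for a b
    using equiv C that by (simp add: in_quotient_imp_in_rel)
  have closed: "p a b \<in> C \<and> m a b \<in> C" if "a \<in> C" "b \<in> C" for a b
  proof - \<comment> \<open>idempotency makes classes subalgebras: \<open>a = aa \<rho> ab\<close>\<close>
    have "(p a a, p a b) \<in> \<rho>" "(m a a, m a b) \<in> \<rho>"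
      using cong related that unfolding semiring_cong_def by blast+
    then have "(a, p a b) \<in> \<rho>" "(a, m a b) \<in> \<rho>"
      using C_sub that by auto
    then show ?thesis
      using in_quotient_imp_closed[OF equiv C \<open>a \<in> C\<close>] by blast
  qed
  have "idem_semiring C p m"
    using idem_semiring C_sub closed unfolding idem_semiring_def by (simp add: subset_iff)
  then show ?thesis
    unfolding LZ_var_def by blast
qed

lemma V_L_if_congruence:
  assumes cong: "semiring_cong S p m \<rho>"
    and quotient: "D_var (S // \<rho>) (quot_op \<rho> p) (quot_op \<rho> m)"
    and classes: "\<forall>C\<in>S // \<rho>. LZ_var C p m"
  shows "V_L S p m"
  unfolding V_L_def
proof (intro conjI idem_semiring ballI)
  fix x y assume x: "x \<in> S" and y: "y \<in> S"
  define u where "u = p (p (m x y) x) (m x y)"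
  have equiv: "equiv S \<rho>"
    using cong by (simp add: semiring_cong_def)
  then have refl: "(a, a) \<in> \<rho>" if "a \<in> S" for a
    using that by (simp add: equiv_def refl_on_def)
  have sym: "sym \<rho>" and trans: "trans \<rho>"
    using equiv by (simp_all add: equiv_def)
  have compatible: "(p a c, p b d) \<in> \<rho>" if "(a, b) \<in> \<rho>" "(c, d) \<in> \<rho>" for a b c d
    using cong that by (simp add: semiring_cong_def)
  have "(p (m x y) x, p x (m x y)) \<in> \<rho>" and absorb: "(p x (m x y), x) \<in> \<rho>"
    using quotient x y by (simp_all add: D_var_quotient_iff[OF cong])
  then have "(p (m x y) x, x) \<in> \<rho>"
    using trans by (blast dest: transD)
  then have "(u, p x (m x y)) \<in> \<rho>"
    unfolding u_def by (rule compatible[OF _ refl]) (use x y in simp_all)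
  then have "(x, u) \<in> \<rho>"
    using absorb sym trans by (blast dest: symD transD)
  moreover have "LZ_var (\<rho> `` {x}) p m"
    using classes x by (simp add: quotientI)
  ultimately have "m x u = x"
    using LZ_var_cong_class_iff[OF cong] refl x by (simp add: quotientI)
  moreover have "m x u = u"
    using x y unfolding u_def by simp
  ultimately show "x = p (p (m x y) x) (m x y)"
    unfolding u_def by simp
qed

end

locale V_L_semiring = idempotent_semiring +
  assumes V_L_identity: "x \<in> S \<Longrightarrow> y \<in> S \<Longrightarrow> x = p (p (m x y) x) (m x y)"
begin

lemma absorb_add_mult[simp]: "x \<in> S \<Longrightarrow> y \<in> S \<Longrightarrow> p x (m x y) = x"
proof -
  assume x: "x \<in> S" and y: "y \<in> S"
  have e: "p (m x y) (p x (m x y)) = x"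
    using V_L_identity[OF x y] x y by simp
  have "p x (m x y) = p (p (m x y) (p x (m x y))) (m x y)"
    by (simp only: e)
  also have "\<dots> = p (m x y) (p x (m x y))"
    using x y by simp
  finally show ?thesis
    using e by simp
qed

lemma absorb_mult_add[simp]: "x \<in> S \<Longrightarrow> y \<in> S \<Longrightarrow> p (m x y) x = x"
proof -
  assume x: "x \<in> S" and y: "y \<in> S"
  have e: "p (m x y) (p x (m x y)) = x"
    using V_L_identity[OF x y] x y by simp
  have "p (m x y) x = p (m x y) (p (m x y) (p x (m x y)))"
    by (simp only: e)
  also have "\<dots> = x"
    using x y e by simp
  finally show ?thesis .
qed

lemma mult_left_regular[simp]: "x \<in> S \<Longrightarrow> y \<in> S \<Longrightarrow> m x (m y x) = m x y"
proof -
  assume x: "x \<in> S" and y: "y \<in> S"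
  have "m (m x y) x = m (m x y) (p x (m x y))"
    using x y by simp
  also have "\<dots> = p (m (m x y) x) (m x y)"
    using x y mult_add_left[of "m x y" x "m x y"] by simp
  also have "\<dots> = m x y"
    by (rule absorb_mult_add) (use x y in simp_all)
  finally show ?thesis
    using x y by simp
qed

lemma mult_left_regular_mult:
  "x \<in> S \<Longrightarrow> y \<in> S \<Longrightarrow> z \<in> S \<Longrightarrow> m x (m y (m x z)) = m x (m y z)"
  using mult_assoc[of x "m y x" z] mult_assoc[of y x z] by simp

lemma left_absorption_mult:
  assumes "a \<in> S" "b \<in> S" "c \<in> S" "d \<in> S" and "m a b = a" "m c d = c"
  shows "m (m a c) (m b d) = m a c"
proof -
  have "m c (m b d) = m c b"
    using assms mult_left_regular_mult[of c b d] by simp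
  then show ?thesis
    using assms mult_left_regular_mult[of a c b] by simp
qed

lemma left_absorption_add:
  assumes "a \<in> S" "b \<in> S" "c \<in> S" "d \<in> S" and "m a b = a" "m c d = c"
  shows "m (p a c) (p b d) = p a c"
proof -
  have "m (p a c) (p b d) = p (m a (p b d)) (m c (p b d))"
    by (rule mult_add_right) (use assms in simp_all)
  then show ?thesis
    using assms by simp
qed

lemma mult_add_swap: "a \<in> S \<Longrightarrow> b \<in> S \<Longrightarrow> m (p a b) (p b a) = p a b"
  using mult_add_right[of a b "p b a"] by simp

definition green_L :: "'a rel" where
  "green_L = {(a, b). a \<in> S \<and> b \<in> S \<and> m a b = a \<and> m b a = b}"

lemma equiv_green_L: "equiv S green_L"
proof (rule equivI)
  show "trans green_L"
  proof (rule transI)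
    fix a b c assume "(a, b) \<in> green_L" "(b, c) \<in> green_L"
    then show "(a, c) \<in> green_L"
      using mult_assoc[of a b c] mult_assoc[of c b a] by (simp add: green_L_def)
  qed
qed (auto simp: green_L_def refl_on_def sym_def)

lemma semiring_cong_green_L: "semiring_cong S p m green_L"
  unfolding semiring_cong_def
  using equiv_green_L left_absorption_mult left_absorption_add by (simp add: green_L_def)

lemma D_var_green_L_quotient: "D_var (S // green_L) (quot_op green_L p) (quot_op green_L m)"
  unfolding D_var_quotient_iff[OF semiring_cong_green_L]
  by (simp add: green_L_def mult_add_swap del: mult_add_left mult_add_right)

lemma LZ_var_green_L_class:
  assumes C: "C \<in> S // green_L"
  shows "LZ_var C p m"
  unfolding LZ_var_cong_class_iff[OF semiring_cong_green_L C]
proof (intro ballI)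
  fix a b assume "a \<in> C" "b \<in> C"
  then have "(a, b) \<in> green_L"
    using in_quotient_imp_in_rel[OF equiv_green_L C] by simp
  then show "m a b = a"
    by (simp add: green_L_def)
qed

lemma malcev_LZ_D: "malcev LZ_var D_var S p m"
  unfolding malcev_def
  using idem_semiring semiring_cong_green_L D_var_green_L_quotient LZ_var_green_L_class by blast

end

lemma V_L_iff_malcev_LZ_D: "V_L S p m \<longleftrightarrow> malcev LZ_var D_var S p m"
proof
  assume "V_L S p m"
  then interpret V_L_semiring S p m
    unfolding V_L_def by unfold_locales blast+
  show "malcev LZ_var D_var S p m"
    by (rule malcev_LZ_D)
next
  assume "malcev LZ_var D_var S p m"
  then obtain \<rho> where "idem_semiring S p m" "semiring_cong S p m \<rho>"
    "D_var (S // \<rho>) (quot_op \<rho> p) (quot_op \<rho> m)" "\<forall>C\<in>S // \<rho>. LZ_var C p m"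
    unfolding malcev_def by blast
  then show "V_L S p m"
    by (intro idempotent_semiring.V_L_if_congruence) (simp_all add: idempotent_semiring_def)
qed

definition opposite_op :: "('b \<Rightarrow> 'b \<Rightarrow> 'c) \<Rightarrow> 'b \<Rightarrow> 'b \<Rightarrow> 'c" where
  "opposite_op f x y = f y x"

lemma opposite_op_opposite_op[simp]: "opposite_op (opposite_op f) = f"
  by (simp add: opposite_op_def fun_eq_iff)

lemma idem_semiring_opposite: "idem_semiring S p (opposite_op m) \<longleftrightarrow> idem_semiring S p m"
  unfolding idem_semiring_def opposite_op_def by auto

lemma V_R_iff_V_L_opposite: "V_R S p m \<longleftrightarrow> V_L S p (opposite_op m)"
  unfolding V_R_def V_L_def idem_semiring_opposite by (simp add: opposite_op_def)

lemma RZ_var_iff_LZ_var_opposite: "RZ_var C p m \<longleftrightarrow> LZ_var C p (opposite_op m)"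
  unfolding RZ_var_def LZ_var_def idem_semiring_opposite by (auto simp: opposite_op_def)

lemma semiring_cong_opposite: "semiring_cong S p (opposite_op m) \<rho> \<longleftrightarrow> semiring_cong S p m \<rho>"
  unfolding semiring_cong_def opposite_op_def by blast

lemma quot_op_opposite: "quot_op \<rho> (opposite_op m) = opposite_op (quot_op \<rho> m)"
  unfolding quot_op_def opposite_op_def by blast

lemma D_var_opposite_imp: "D_var Q P M \<Longrightarrow> D_var Q P (opposite_op M)"
  unfolding D_var_def idem_semiring_opposite opposite_op_def by metis

lemma D_var_opposite: "D_var Q P (opposite_op M) \<longleftrightarrow> D_var Q P M"
  using D_var_opposite_imp[of Q P M] D_var_opposite_imp[of Q P "opposite_op M"] by auto

lemma V_R_iff_malcev_RZ_D: "V_R S p m \<longleftrightarrow> malcev RZ_var D_var S p m"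
proof -
  have "malcev RZ_var D_var S p m \<longleftrightarrow> malcev LZ_var D_var S p (opposite_op m)"
    unfolding malcev_def idem_semiring_opposite semiring_cong_opposite quot_op_opposite
      D_var_opposite RZ_var_iff_LZ_var_opposite ..
  then show ?thesis
    using V_L_iff_malcev_LZ_D V_R_iff_V_L_opposite by blast
qed

theorem theorem4p1:
  fixes S :: "'a set" and p m :: "'a \<Rightarrow> 'a \<Rightarrow> 'a"
  shows "(V_L S p m \<longleftrightarrow> malcev LZ_var D_var S p m) \<and>
         (V_R S p m \<longleftrightarrow> malcev RZ_var D_var S p m)"
  using V_L_iff_malcev_LZ_D V_R_iff_malcev_RZ_D by blast

end
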